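(* Let $k\ge2$, let $p_1,\dots,p_k$ be distinct primes, $n=p_1\cdots p_k$, and let $$f(x)=(1-x^{n})\cdot\frac{\prod_{i=2}^k\big(1-x^{p_2\cdots p_k/p_i}\big)}{\prod_{i=1}^k\big(1-x^{n/p_i}\big)}\in\mathbb{Z}[[x]].$$ Let $f^*$ be the unique polynomial of degree $<n$ with $f^*\equiv f\pmod{x^n}$. Then every coefficient of $f^*$ has absolute value at most $\binom{k-2}{\lfloor (k-2)/2\rfloor}$.
   Context: $f$ is viewed as a formal power series (its denominator has constant term $1$). In the exponents, $p_2\cdots p_k/p_i$ means $p_2\cdots p_k$ divided by $p_i$. *)

theory Defs
  imports "HOL-Computational_Algebra.Computational_Algebra"
begin

end

theory Submission
  imports Defs "HOL-Number_Theory.Cong"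
begin

(*
  Write I = {2..k}, B_i = n / p_i and a_i = (p_2 ... p_k) / p_i.  Since
  1 / (1 - x^B) = sum_m x^(B m), below x^n the series f agrees with
    prod_(i in I) (1 - x^(a_i)) * prod_(i=1..k) 1 / (1 - x^(B_i)),
  so its e-th coefficient is sum_(S subset I) (-1)^|S| H(e - sum_S a_i), where H(t) counts
  representations t = sum_i c_i B_i.  For t < n such a representation is unique if it
  exists: c_i for i >= 2 is forced to be the residue of t / B_i modulo p_i, and it exists
  iff sum_(i in I) c_i B_i <= t.  Subtracting sum_S a_i shifts these residues only in the
  coordinates i in S, so the coefficient becomes an alternating sum over S subset I of the
  indicator of a threshold condition  sum_(I-S) u_i + sum_S w_i <= e.  Splitting off the
  coordinate with the smallest step |w_i - u_i| reduces such a sum to counting subsets in a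
  window, and these form an antichain after a flip, so Sperner's theorem bounds the count by
  the central binomial coefficient of |I| - 1 = k - 2.
*)

lemma binomial_ratio_Suc:
  assumes "c \<le> N"
  shows "real (Suc N - c) / real (N choose c) = real (Suc N) / real (Suc N choose c)"
proof -
  have "(Suc N - c) * (Suc N choose c) = Suc N * (N choose c)"
    using binomial_absorb_comp[of "Suc N" c] by simp
  then have "real (Suc N - c) * real (Suc N choose c) = real (Suc N) * real (N choose c)"
    by (simp only: of_nat_mult[symmetric])
  moreover have "real (N choose c) \<noteq> 0" "real (Suc N choose c) \<noteq> 0" using assms by simp_all
  ultimately show ?thesis by (simp add: frac_eq_eq)
qed

text \<open>Double counting pairs \<open>(x, S)\<close> with \<open>x \<in> A - S\<close>.\<close>

lemma sum_over_avoiding_sets: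
  fixes g :: "'a set \<Rightarrow> 'b::comm_semiring_1"
  assumes "finite A" "finite F"
  shows "(\<Sum>x\<in>A. \<Sum>S\<in>{S\<in>F. x \<notin> S}. g S) = (\<Sum>S\<in>F. of_nat (card (A - S)) * g S)"
proof -
  have "(\<Sum>x\<in>A. \<Sum>S\<in>{S\<in>F. x \<notin> S}. g S) = (\<Sum>S\<in>F. \<Sum>x\<in>A. if x \<notin> S then g S else 0)"
    using assms(2) by (simp add: sum.inter_filter sum.swap[of _ A])
  also have "\<dots> = (\<Sum>S\<in>F. of_nat (card (A - S)) * g S)"
    using assms(1) by (intro sum.cong refl) (simp flip: sum.inter_filter add: set_diff_eq)
  finally show ?thesis .
qed

text \<open>Induction on \<open>card A\<close>: deleting a point \<open>x\<close>
  leaves the antichain of members avoiding \<open>x\<close>, and summing over all \<open>x\<close> counts every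
  \<open>S \<in> F\<close> exactly \<open>card (A - S)\<close> times.\<close>

lemma LYM_inequality:
  fixes A :: "'a set" and F :: "'a set set"
  assumes "finite A" "F \<subseteq> Pow A" "\<forall>S\<in>F. \<forall>T\<in>F. S \<subseteq> T \<longrightarrow> S = T"
  shows "(\<Sum>S\<in>F. 1 / real (card A choose card S)) \<le> 1"
  using assms
proof (induction "card A" arbitrary: A F)
  case 0
  then have "F = {} \<or> F = {{}}" by (simp add: subset_singleton_iff)
  then show ?case using 0 by auto
next
  case (Suc N)
  show ?case
  proof (cases "A \<in> F")
    case True
    then have "F = {A}" using Suc.prems by blast
    then show ?thesis by simp
  next
    case A_notin_F: False
    have fin_F: "finite F" using Suc.prems(1,2) finite_subset by blast
    let ?w = "\<lambda>S. 1 / real (N choose card S)"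
    have IH: "(\<Sum>S\<in>{S\<in>F. x \<notin> S}. ?w S) \<le> 1" if "x \<in> A" for x
    proof -
      have card_A_x: "N = card (A - {x})" using Suc.hyps(2) Suc.prems(1) that by simp
      have "(\<Sum>S\<in>{S\<in>F. x \<notin> S}. 1 / real (card (A - {x}) choose card S)) \<le> 1"
      proof (rule Suc.hyps(1)[OF card_A_x])
        show "finite (A - {x})" using Suc.prems(1) by simp
        show "{S\<in>F. x \<notin> S} \<subseteq> Pow (A - {x})" using Suc.prems(2) by auto
        show "\<forall>S\<in>{S\<in>F. x \<notin> S}. \<forall>T\<in>{S\<in>F. x \<notin> S}. S \<subseteq> T \<longrightarrow> S = T"
          using Suc.prems(3) by blast
      qed
      then show ?thesis by (simp only: card_A_x)
    qed
    note count = sum_over_avoiding_sets[OF Suc.prems(1) fin_F, of ?w]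
    have weight: "real (card (A - S)) * ?w S = real (Suc N) / real (Suc N choose card S)"
      if "S \<in> F" for S
    proof -
      have sub: "S \<subset> A" using that Suc.prems(2) A_notin_F by auto
      then have "card S < Suc N" using Suc.prems(1) Suc.hyps(2) by (metis psubset_card_mono)
      moreover have "card (A - S) = Suc N - card S"
        using sub Suc.prems(1) Suc.hyps(2) by (metis card_Diff_subset finite_subset psubset_imp_subset)
      ultimately show ?thesis using binomial_ratio_Suc[of "card S" N] by simp
    qed
    have "real (Suc N) * (\<Sum>S\<in>F. 1 / real (card A choose card S))
        = (\<Sum>x\<in>A. \<Sum>S\<in>{S\<in>F. x \<notin> S}. ?w S)"
      using count weight Suc.hyps(2) by (simp add: sum_distrib_left)
    also have "\<dots> \<le> real (Suc N)"
      using sum_mono[of A _ "\<lambda>_. 1", OF IH] Suc.hyps(2) by simp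
    finally show ?thesis by simp
  qed
qed

lemma Sperner:
  fixes A :: "'a set" and F :: "'a set set"
  assumes "finite A" "F \<subseteq> Pow A" "\<forall>S\<in>F. \<forall>T\<in>F. S \<subseteq> T \<longrightarrow> S = T"
  shows "card F \<le> card A choose (card A div 2)"
proof -
  let ?M = "real (card A choose (card A div 2))"
  have "real (card F) \<le> (\<Sum>S\<in>F. ?M / real (card A choose card S))"
  proof -
    have "1 \<le> ?M / real (card A choose card S)" if "S \<in> F" for S
    proof -
      have "card S \<le> card A" using that assms(1,2) by (meson PowD card_mono subsetD)
      then have "0 < real (card A choose card S)" by simp
      moreover have "real (card A choose card S) \<le> ?M" using binomial_maximum by simp
      ultimately show ?thesis by (simp add: le_divide_eq)
    qed
    then have "(\<Sum>S\<in>F. 1) \<le> (\<Sum>S\<in>F. ?M / real (card A choose card S))"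
      by (rule sum_mono)
    then show ?thesis by simp
  qed
  also have "\<dots> = ?M * (\<Sum>S\<in>F. 1 / real (card A choose card S))"
    by (simp add: sum_distrib_left)
  also have "\<dots> \<le> ?M" using mult_left_mono[OF LYM_inequality[OF assms]] by simp
  finally show ?thesis by simp
qed

lemma alternating_sum_Pow_insert:
  fixes h :: "'a set \<Rightarrow> 'b::comm_ring_1"
  assumes "finite J" "i \<notin> J"
  shows "(\<Sum>S\<in>Pow (insert i J). (-1)^card S * h S)
       = (\<Sum>S\<in>Pow J. (-1)^card S * (h S - h (insert i S)))"
proof -
  have "(\<Sum>S\<in>Pow (insert i J). (-1)^card S * h S)
      = (\<Sum>S\<in>Pow J. (-1)^card S * h S) + (\<Sum>S\<in>insert i ` Pow J. (-1)^card S * h S)"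
    unfolding Pow_insert using assms by (intro sum.union_disjoint) auto
  also have "(\<Sum>S\<in>insert i ` Pow J. (-1)^card S * h S)
      = (\<Sum>S\<in>Pow J. (-1)^card (insert i S) * h (insert i S))"
    using assms(2) by (intro sum.reindex[unfolded comp_def]) (auto simp: inj_on_def)
  also have "\<dots> = (\<Sum>S\<in>Pow J. - ((-1)^card S * h (insert i S)))"
  proof (intro sum.cong refl)
    fix S assume "S \<in> Pow J"
    then have "finite S" "i \<notin> S" using assms finite_subset by auto
    then show "(-1)^card (insert i S) * h (insert i S) = - ((-1)^card S * h (insert i S))"
      by simp
  qed
  finally show ?thesis by (simp add: sum_negf algebra_simps flip: sum_subtractf)
qed

lemma threshold_sum_flip:
  fixes u w :: "'a \<Rightarrow> 'b::linordered_idom"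
  assumes "finite J" "S \<subseteq> J"
  shows "(\<Sum>j\<in>J-S. u j) + (\<Sum>j\<in>S. w j) = (\<Sum>j\<in>J. min (u j) (w j))
           + (\<Sum>j\<in>(S - {j\<in>J. w j < u j}) \<union> ({j\<in>J. w j < u j} - S). \<bar>w j - u j\<bar>)"
    (is "_ = _ + (\<Sum>j\<in>?T. _)")
proof -
  have "(\<Sum>j\<in>J-S. u j) + (\<Sum>j\<in>S. w j) = (\<Sum>j\<in>J. if j \<in> S then w j else u j)"
    using assms by (simp add: sum.If_cases Diff_eq Int_absorb1)
  also have "\<dots> = (\<Sum>j\<in>J. min (u j) (w j) + (if j \<in> ?T then \<bar>w j - u j\<bar> else 0))"
    by (intro sum.cong refl) auto
  also have "\<dots> = (\<Sum>j\<in>J. min (u j) (w j)) + (\<Sum>j\<in>J \<inter> ?T. \<bar>w j - u j\<bar>)"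
    using assms(1) by (simp add: sum.distrib sum.inter_restrict)
  also have "J \<inter> ?T = ?T" using assms(2) by auto
  finally show ?thesis .
qed

text \<open>After flipping the
  coordinates where \<open>w < u\<close>, \<open>V\<close> becomes strictly monotone with increments \<open>\<ge> d\<close>, so these
  subsets form an antichain and Sperner's theorem applies.\<close>

lemma card_window_le_central_binomial:
  fixes J :: "'a set" and u w :: "'a \<Rightarrow> int" and c d :: int
  assumes fin_J: "finite J" and gap: "\<And>j. j \<in> J \<Longrightarrow> d \<le> \<bar>w j - u j\<bar>"
  defines "V S \<equiv> (\<Sum>j\<in>J-S. u j) + (\<Sum>j\<in>S. w j)"
  shows "card {S\<in>Pow J. c < V S \<and> V S \<le> c + d} \<le> card J choose (card J div 2)"
proof -
  define W where "W = {S\<in>Pow J. c < V S \<and> V S \<le> c + d}"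
  define P where "P = {j\<in>J. w j < u j}"
  define flip where "flip S = (S - P) \<union> (P - S)" for S
  define L where "L = (\<Sum>j\<in>J. min (u j) (w j))"
  have V_flip: "V S = L + (\<Sum>j\<in>flip S. \<bar>w j - u j\<bar>)" if "S \<subseteq> J" for S
    unfolding V_def L_def flip_def P_def using fin_J that by (rule threshold_sum_flip)
  have flip_flip: "flip (flip S) = S" for S by (auto simp: flip_def)
  have flip_W: "flip ` W \<subseteq> Pow J" by (auto simp: flip_def P_def W_def)
  have antichain: "\<forall>T1\<in>flip ` W. \<forall>T2\<in>flip ` W. T1 \<subseteq> T2 \<longrightarrow> T1 = T2"
  proof (intro ballI impI, rule ccontr)
    fix T1 T2 assume T: "T1 \<in> flip ` W" "T2 \<in> flip ` W" "T1 \<subseteq> T2" "T1 \<noteq> T2"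
    then obtain S1 S2 where S: "S1 \<in> W" "S2 \<in> W" "T1 = flip S1" "T2 = flip S2" by auto
    obtain j where j: "j \<in> T2 - T1" using T by blast
    have T2_J: "T2 \<subseteq> J" using T flip_W by auto
    then have fin_T2: "finite T2" using fin_J finite_subset by blast
    have "(\<Sum>i\<in>T2. \<bar>w i - u i\<bar>) = (\<Sum>i\<in>T1. \<bar>w i - u i\<bar>) + (\<Sum>i\<in>T2 - T1. \<bar>w i - u i\<bar>)"
      using T(3) fin_T2 by (metis add.commute sum.subset_diff)
    moreover have "\<bar>w j - u j\<bar> \<le> (\<Sum>i\<in>T2 - T1. \<bar>w i - u i\<bar>)"
      using j fin_T2 by (intro member_le_sum) auto
    moreover have "d \<le> \<bar>w j - u j\<bar>" using j T2_J gap by auto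
    moreover have "S1 \<subseteq> J" "S2 \<subseteq> J" using S(1,2) by (auto simp: W_def)
    ultimately have "V S1 + d \<le> V S2" using V_flip S(3,4) by simp
    moreover have "c < V S1" "V S2 \<le> c + d" using S(1,2) by (auto simp: W_def)
    ultimately show False by linarith
  qed
  have "inj_on flip W" by (rule inj_onI) (metis flip_flip)
  then have "card W = card (flip ` W)" by (simp add: card_image)
  also have "\<dots> \<le> card J choose (card J div 2)" by (rule Sperner[OF fin_J flip_W antichain])
  finally show ?thesis by (simp add: W_def)
qed

lemma threshold_sums_insert:
  fixes u w :: "'a \<Rightarrow> 'b::comm_monoid_add"
  assumes "finite J" "i \<notin> J" "S \<subseteq> J"
  shows "(\<Sum>j\<in>insert i J - S. u j) + (\<Sum>j\<in>S. w j) = (\<Sum>j\<in>J - S. u j) + (\<Sum>j\<in>S. w j) + u i"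
    and "(\<Sum>j\<in>insert i J - insert i S. u j) + (\<Sum>j\<in>insert i S. w j)
       = (\<Sum>j\<in>J - S. u j) + (\<Sum>j\<in>S. w j) + w i"
proof -
  have "insert i J - S = insert i (J - S)" "insert i J - insert i S = J - S"
    using assms by auto
  moreover have "finite S" "i \<notin> S" using assms finite_subset by auto
  ultimately show "(\<Sum>j\<in>insert i J - S. u j) + (\<Sum>j\<in>S. w j) = (\<Sum>j\<in>J - S. u j) + (\<Sum>j\<in>S. w j) + u i"
    and "(\<Sum>j\<in>insert i J - insert i S. u j) + (\<Sum>j\<in>insert i S. w j)
       = (\<Sum>j\<in>J - S. u j) + (\<Sum>j\<in>S. w j) + w i"
    using assms by (simp_all add: ac_simps)
qed

text \<open>Split off the coordinate \<open>i\<^sub>0\<close> with the smallest step \<open>\<bar>w i\<^sub>0 - u i\<^sub>0\<bar>\<close>; the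
  first differences in direction \<open>i\<^sub>0\<close> are \<open>0\<close> or \<open>\<plusminus>1\<close>, and they are nonzero only on a
  window of length \<open>\<bar>w i\<^sub>0 - u i\<^sub>0\<bar>\<close>.\<close>

lemma alternating_threshold_sum_bound:
  fixes I :: "'a set" and u w :: "'a \<Rightarrow> int" and C :: int
  assumes fin_I: "finite I" and "I \<noteq> {}"
  shows "\<bar>\<Sum>S\<in>Pow I. (-1)^card S * (if (\<Sum>i\<in>I-S. u i) + (\<Sum>i\<in>S. w i) \<le> C then 1 else 0)\<bar>
           \<le> int ((card I - 1) choose ((card I - 1) div 2))"
proof -
  define \<delta> where "\<delta> j = \<bar>w j - u j\<bar>" for j
  have "Min (\<delta> ` I) \<in> \<delta> ` I" using fin_I assms(2) by (intro Min_in) auto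
  then obtain i0 where i0: "i0 \<in> I" "\<delta> i0 = Min (\<delta> ` I)" by auto
  define J where "J = I - {i0}"
  have I_J: "I = insert i0 J" "i0 \<notin> J" "finite J" using i0(1) fin_I by (auto simp: J_def)
  have gap: "\<delta> i0 \<le> \<bar>w j - u j\<bar>" if "j \<in> J" for j
    unfolding i0(2) using fin_I that by (auto simp: J_def \<delta>_def intro: Min_le)
  define V where "V S = (\<Sum>j\<in>J-S. u j) + (\<Sum>j\<in>S. w j)" for S
  define h where "h S = (if (\<Sum>i\<in>I-S. u i) + (\<Sum>i\<in>S. w i) \<le> C then 1 else (0::int))" for S
  have h_out: "h S = (if V S + u i0 \<le> C then 1 else 0)" if "S \<subseteq> J" for S
    using threshold_sums_insert(1)[OF I_J(3,2) that, of u w] by (simp add: h_def V_def I_J(1))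
  have h_in: "h (insert i0 S) = (if V S + w i0 \<le> C then 1 else 0)" if "S \<subseteq> J" for S
    using threshold_sums_insert(2)[OF I_J(3,2) that, of u w] by (simp add: h_def V_def I_J(1))
  let ?c = "C - max (u i0) (w i0)"
  have window: "{S\<in>Pow J. h S \<noteq> h (insert i0 S)} \<subseteq> {S\<in>Pow J. ?c < V S \<and> V S \<le> ?c + \<delta> i0}"
    using h_out h_in by (auto simp: \<delta>_def split: if_splits)
  have "\<bar>\<Sum>S\<in>Pow I. (-1)^card S * h S\<bar> = \<bar>\<Sum>S\<in>Pow J. (-1)^card S * (h S - h (insert i0 S))\<bar>"
    unfolding I_J(1) by (simp only: alternating_sum_Pow_insert[OF I_J(3,2)])
  also have "\<dots> \<le> (\<Sum>S\<in>Pow J. \<bar>(-1)^card S * (h S - h (insert i0 S))\<bar>)"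
    by (rule sum_abs)
  also have "\<dots> = (\<Sum>S\<in>Pow J. if h S \<noteq> h (insert i0 S) then 1 else 0)"
    by (intro sum.cong refl) (simp add: abs_mult h_def)
  also have "\<dots> = int (card {S\<in>Pow J. h S \<noteq> h (insert i0 S)})"
    using I_J(3) by (simp add: sum.inter_filter[symmetric])
  also have "\<dots> \<le> int (card {S\<in>Pow J. ?c < V S \<and> V S \<le> ?c + \<delta> i0})"
    using window I_J(3) by (simp add: card_mono)
  also have "\<dots> \<le> int (card J choose (card J div 2))"
    using card_window_le_central_binomial[OF I_J(3) gap, where c = ?c] by (simp add: V_def)
  also have "card J = card I - 1" using I_J by simp
  finally show ?thesis by (simp add: h_def)
qed

definition fps_multiples :: "nat \<Rightarrow> 'a::comm_ring_1 fps" where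
  "fps_multiples b = Abs_fps (\<lambda>t. if b dvd t then 1 else 0)"

lemma fps_one_minus_X_power_times_multiples:
  assumes "b > 0"
  shows "(1 - fps_X ^ b) * (fps_multiples b :: 'a::comm_ring_1 fps) = 1"
proof (rule fps_ext)
  fix t
  have "((1 - fps_X ^ b) * fps_multiples b) $ t
      = (fps_multiples b :: 'a fps) $ t - (fps_X ^ b * fps_multiples b) $ t"
    by (simp add: algebra_simps)
  also have "\<dots> = (1 :: 'a fps) $ t"
  proof (cases "t < b")
    case True
    then have "b dvd t \<longleftrightarrow> t = 0" using assms by (auto dest: dvd_imp_le)
    then show ?thesis using True by (simp add: fps_X_power_mult_nth fps_multiples_def)
  next
    case False
    then have "b dvd (t - b) \<longleftrightarrow> b dvd t" by (simp add: dvd_minus_self)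
    then show ?thesis using False assms by (simp add: fps_X_power_mult_nth fps_multiples_def)
  qed
  finally show "((1 - fps_X ^ b) * fps_multiples b) $ t = (1 :: 'a fps) $ t" .
qed

lemma fps_prod_one_minus_X_power_times_multiples:
  assumes "finite I" "\<And>i. i \<in> I \<Longrightarrow> B i > 0"
  shows "(\<Prod>i\<in>I. 1 - fps_X ^ B i) * (\<Prod>i\<in>I. fps_multiples (B i)) = (1 :: 'a::comm_ring_1 fps)"
proof -
  have "(\<Prod>i\<in>I. 1 - fps_X ^ B i) * (\<Prod>i\<in>I. fps_multiples (B i))
      = (\<Prod>i\<in>I. (1 - fps_X ^ B i) * (fps_multiples (B i) :: 'a fps))"
    by (simp add: prod.distrib)
  also have "\<dots> = 1" using assms by (simp add: fps_one_minus_X_power_times_multiples)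
  finally show ?thesis .
qed

text \<open>The coefficient of \<open>x\<^sup>t\<close> in \<open>\<Prod>\<^sub>i 1 / (1 - x\<^sup>B\<^sup>i)\<close> counts the representations
  \<open>t = \<Sum>\<^sub>i c\<^sub>i\<close> with \<open>B\<^sub>i dvd c\<^sub>i\<close>, encoded as multisets with multiplicities \<open>c\<^sub>i\<close>.\<close>

lemma coeff_prod_fps_multiples:
  assumes "finite I"
  shows "(\<Prod>i\<in>I. fps_multiples (B i) :: 'a::comm_ring_1 fps) $ t
       = of_nat (card {X \<in> multisets_of_size I t. \<forall>x\<in>I. B x dvd count X x})"
proof -
  have "(\<Prod>i\<in>I. fps_multiples (B i) :: 'a fps) $ t
      = (\<Sum>X\<in>multisets_of_size I t. \<Prod>x\<in>I. (fps_multiples (B x) :: 'a fps) $ count X x)"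
    by (rule fps_prod_nth'[OF assms])
  also have "\<dots> = (\<Sum>X\<in>multisets_of_size I t. if \<forall>x\<in>I. B x dvd count X x then 1 else 0)"
  proof (intro sum.cong refl)
    fix X :: "'b multiset"
    show "(\<Prod>x\<in>I. (fps_multiples (B x) :: 'a fps) $ count X x)
        = (if \<forall>x\<in>I. B x dvd count X x then 1 else 0)"
      using assms by (auto simp: fps_multiples_def) (metis (mono_tags, lifting) prod_zero)
  qed
  also have "\<dots> = of_nat (card {X \<in> multisets_of_size I t. \<forall>x\<in>I. B x dvd count X x})"
    using finite_multisets_of_size[OF assms, of t] by (simp add: sum.inter_filter[symmetric])
  finally show ?thesis .
qed

lemma prod_one_minus_X_power_expand:
  assumes "finite I"
  shows "(\<Prod>i\<in>I. 1 - fps_X ^ a i :: 'a::comm_ring_1 fps)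
       = (\<Sum>S\<in>Pow I. (-1)^card S * fps_X ^ (\<Sum>i\<in>S. a i))"
proof -
  have "(\<Prod>i\<in>I. 1 - fps_X ^ a i :: 'a fps) = (\<Prod>i\<in>I. - (fps_X ^ a i) + 1)" by simp
  also have "\<dots> = (\<Sum>S\<in>Pow I. (\<Prod>i\<in>S. - (fps_X ^ a i)) * (\<Prod>i\<in>I - S. 1))"
    by (rule prod_add[OF assms])
  also have "\<dots> = (\<Sum>S\<in>Pow I. (-1)^card S * fps_X ^ (\<Sum>i\<in>S. a i))"
  proof (intro sum.cong refl)
    fix S assume "S \<in> Pow I"
    have "(\<Prod>i\<in>S. - (fps_X ^ a i)) = (\<Prod>i\<in>S. (-1) * fps_X ^ a i :: 'a fps)" by simp
    also have "\<dots> = (-1)^card S * fps_X ^ (\<Sum>i\<in>S. a i)"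
      by (simp only: prod.distrib prod_constant power_sum)
    finally show "(\<Prod>i\<in>S. - (fps_X ^ a i)) * (\<Prod>i\<in>I - S. 1)
        = (-1)^card S * (fps_X ^ (\<Sum>i\<in>S. a i) :: 'a fps)" by simp
  qed
  finally show ?thesis .
qed

lemma coeff_prod_one_minus_X_power_mult:
  assumes "finite I"
  shows "((\<Prod>i\<in>I. 1 - fps_X ^ a i) * G :: 'a::comm_ring_1 fps) $ e
       = (\<Sum>S\<in>Pow I. (-1)^card S * (if (\<Sum>i\<in>S. a i) \<le> e then G $ (e - (\<Sum>i\<in>S. a i)) else 0))"
proof -
  have neg_one_power_nth: "((-1) ^ c * F :: 'a fps) $ m = (-1) ^ c * F $ m" for c m F
    by (induction c) auto
  show ?thesis
    unfolding prod_one_minus_X_power_expand[OF assms] sum_distrib_right mult.assoc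
    by (simp add: fps_sum_nth neg_one_power_nth fps_X_power_mult_nth)
      (rule sum.cong[OF refl], simp add: not_less)
qed

lemma coeff_quotient_below:
  fixes f :: "'a::field fps"
  assumes "finite I" "finite I'" "\<And>i. i \<in> I' \<Longrightarrow> B i > 0" "e < n"
    and "f = (1 - fps_X ^ n) * (\<Prod>i\<in>I. 1 - fps_X ^ a i) / (\<Prod>i\<in>I'. 1 - fps_X ^ B i)"
  shows "f $ e = (\<Sum>S\<in>Pow I. (-1)^card S *
             (if (\<Sum>i\<in>S. a i) \<le> e then (\<Prod>i\<in>I'. fps_multiples (B i)) $ (e - (\<Sum>i\<in>S. a i)) else 0))"
proof -
  let ?Q = "\<Prod>i\<in>I'. 1 - fps_X ^ B i :: 'a fps"
  let ?H = "\<Prod>i\<in>I'. fps_multiples (B i) :: 'a fps"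
  let ?G = "(\<Prod>i\<in>I. 1 - fps_X ^ a i) * ?H"
  have QH: "?Q * ?H = 1" using assms(2,3) by (rule fps_prod_one_minus_X_power_times_multiples)
  then have "?Q $ 0 \<noteq> 0" by (metis fps_mult_nth_0 fps_one_nth mult_zero_left one_neq_zero)
  then have "f = (1 - fps_X ^ n) * (\<Prod>i\<in>I. 1 - fps_X ^ a i) * inverse ?Q"
    using assms(5) by (simp add: fps_divide_unit)
  also have "inverse ?Q = ?H" using QH by (rule fps_inverse_unique)
  finally have "f = ?G - fps_X ^ n * ?G" by (simp add: algebra_simps)
  then have "f $ e = ?G $ e" using assms(4) by (simp add: fps_X_power_mult_nth)
  then show ?thesis by (simp add: coeff_prod_one_minus_X_power_mult[OF assms(1)])
qed

lemma sum_cong_single_term: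
  fixes c :: "'a \<Rightarrow> nat"
  assumes "finite A" "\<And>j. j \<in> A \<Longrightarrow> j \<noteq> i \<Longrightarrow> m dvd c j"
  shows "[(\<Sum>j\<in>A. c j) = (if i \<in> A then c i else 0)] (mod m)"
proof -
  have "(\<Sum>j\<in>A. c j) = (if i \<in> A then c i else 0) + (\<Sum>j\<in>A - {i}. c j)"
    using assms(1) by (cases "i \<in> A") (simp_all add: sum.remove)
  moreover have "m dvd (\<Sum>j\<in>A - {i}. c j)" using assms(2) by (intro dvd_sum) auto
  ultimately show ?thesis by (simp add: cong_def mod_add_right_eq[symmetric])
qed

lemma size_eq_sum_count:
  assumes "finite A" "set_mset X \<subseteq> A"
  shows "size X = (\<Sum>x\<in>A. count X x)"
proof -
  have "size X = (\<Sum>x\<in>set_mset X. count X x)" by (simp add: size_multiset_overloaded_eq)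
  also have "\<dots> = (\<Sum>x\<in>A. count X x)"
    using assms by (intro sum.mono_neutral_left) (auto simp: not_in_iff)
  finally show ?thesis .
qed

text \<open>Counting representations \<open>t = \<Sum>\<^sub>i c\<^sub>i\<close> with \<open>B\<^sub>i dvd c\<^sub>i\<close> over the index set
  \<open>insert i\<^sub>1 I\<close>, in the situation of the cofactors \<open>B\<^sub>i = n / p\<^sub>i\<close> of pairwise coprime
  moduli.  For \<open>t < n\<close> each \<open>c\<^sub>i\<close> with \<open>i \<in> I\<close> is forced modulo \<open>p\<^sub>i\<close>, hence equal to
  \<open>((t v\<^sub>i) mod p\<^sub>i) B\<^sub>i\<close> where \<open>v\<^sub>i\<close> inverts \<open>B\<^sub>i\<close> modulo \<open>p\<^sub>i\<close>; the remaining part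
  \<open>c\<^sub>i\<^sub>1\<close> is then automatically divisible by \<open>B\<^sub>i\<^sub>1\<close>.  So there is exactly one
  representation or none, according to a threshold condition.\<close>

context
  fixes p B v :: "'a \<Rightarrow> nat" and I :: "'a set" and i1 :: 'a and n :: nat
  assumes fin_I: "finite I" and i1_notin: "i1 \<notin> I"
    and n_eq: "\<And>i. i \<in> I \<Longrightarrow> n = p i * B i"
    and p_dvd_B: "\<And>i j. i \<in> I \<Longrightarrow> j \<in> insert i1 I \<Longrightarrow> j \<noteq> i \<Longrightarrow> p i dvd B j"
    and B_inverse: "\<And>i. i \<in> I \<Longrightarrow> [B i * v i = 1] (mod p i)"
    and p_pos: "\<And>i. i \<in> I \<Longrightarrow> p i > 0"
    and B_i1_dvd: "\<And>D. (\<And>i. i \<in> I \<Longrightarrow> p i dvd D) \<Longrightarrow> B i1 dvd D"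
begin

lemma residue_times_cofactor_cong:
  assumes "i \<in> I"
  shows "[(t * v i) mod p i * B i = t] (mod p i)"
proof -
  have "[(t * v i) mod p i * B i = t * v i * B i] (mod p i)"
    by (intro cong_mult) (simp_all add: cong_def)
  also have "t * v i * B i = t * (B i * v i)" by (simp add: ac_simps)
  also have "[t * (B i * v i) = t * 1] (mod p i)"
    using assms B_inverse by (intro cong_mult cong_refl) auto
  finally show ?thesis by simp
qed

lemma cofactor_sum_cong:
  assumes "i \<in> I" "i \<in> A" "A \<subseteq> insert i1 I" "\<And>j. j \<in> A \<Longrightarrow> B j dvd c j"
  shows "[(\<Sum>j\<in>A. c j) = c i] (mod p i)"
proof -
  have "[(\<Sum>j\<in>A. c j) = (if i \<in> A then c i else 0)] (mod p i)"
  proof (rule sum_cong_single_term)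
    show "finite A" using assms(3) fin_I finite_subset by auto
    fix j assume "j \<in> A" "j \<noteq> i"
    then have "p i dvd B j" using p_dvd_B[OF assms(1)] assms(3) by auto
    then show "p i dvd c j" using assms(4) \<open>j \<in> A\<close> dvd_trans by blast
  qed
  then show ?thesis using assms(2) by simp
qed

lemma forced_remainder_dvd:
  assumes "(\<Sum>i\<in>I. (t * v i) mod p i * B i) \<le> t"
  shows "B i1 dvd t - (\<Sum>i\<in>I. (t * v i) mod p i * B i)"
proof (rule B_i1_dvd)
  fix i assume i: "i \<in> I"
  have "[(\<Sum>j\<in>I. (t * v j) mod p j * B j) = (t * v i) mod p i * B i] (mod p i)"
    by (rule cofactor_sum_cong[OF i i subset_insertI]) simp
  then have "[t = (\<Sum>j\<in>I. (t * v j) mod p j * B j)] (mod p i)"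
    using residue_times_cofactor_cong[OF i] by (metis cong_sym cong_trans)
  then show "p i dvd t - (\<Sum>i\<in>I. (t * v i) mod p i * B i)" using assms by (simp add: cong_altdef_nat)
qed

lemma representation_forced:
  assumes X: "X \<in> multisets_of_size (insert i1 I) t" "\<forall>x\<in>insert i1 I. B x dvd count X x"
    and "t < n" and i: "i \<in> I"
  shows "count X i = (t * v i) mod p i * B i"
proof -
  have fin: "finite (insert i1 I)" using fin_I by simp
  have size: "(\<Sum>x\<in>insert i1 I. count X x) = t"
    using X(1) size_eq_sum_count[OF fin] by (auto simp: multisets_of_size_def)
  have "B i dvd count X i" using X(2) i by simp
  then obtain c where c: "count X i = c * B i" by (metis dvd_def mult.commute)
  have "count X i \<le> t" using member_le_sum[of i "insert i1 I" "count X"] fin i size by simp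
  then have "c * B i < p i * B i" using \<open>t < n\<close> n_eq[OF i] c by linarith
  then have c_less: "c < p i" by (meson mult_less_cancel2)
  have "[c * B i = (t * v i) mod p i * B i] (mod p i)"
    using cofactor_sum_cong[OF i insertI2[OF i] order.refl, of "count X"] X(2) size c
      residue_times_cofactor_cong[OF i, of t] by (metis cong_sym cong_trans)
  then have "[c * B i * v i = (t * v i) mod p i * B i * v i] (mod p i)"
    by (rule cong_mult[OF _ cong_refl])
  then have "[c * (B i * v i) = (t * v i) mod p i * (B i * v i)] (mod p i)"
    by (simp only: mult.assoc)
  moreover have "[x * (B i * v i) = x] (mod p i)" for x
    using cong_mult[OF cong_refl B_inverse[OF i], of x] by simp
  ultimately have "[c = (t * v i) mod p i] (mod p i)" by (metis cong_sym cong_trans)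
  then have "c = (t * v i) mod p i"
    by (rule cong_less_modulus_unique_nat) (use c_less p_pos[OF i] in auto)
  then show ?thesis using c by simp
qed

lemma card_representations:
  assumes "t < n"
  shows "card {X \<in> multisets_of_size (insert i1 I) t. \<forall>x\<in>insert i1 I. B x dvd count X x}
       = (if (\<Sum>i\<in>I. (t * v i) mod p i * B i) \<le> t then 1 else 0)"
proof -
  define R where "R = {X \<in> multisets_of_size (insert i1 I) t. \<forall>x\<in>insert i1 I. B x dvd count X x}"
  define s where "s = (\<Sum>i\<in>I. (t * v i) mod p i * B i)"
  define cnt where "cnt x = (if x = i1 then t - s else (t * v x) mod p x * B x)" for x
  define X0 where "X0 = (\<Sum>x\<in>insert i1 I. replicate_mset (cnt x) x)"
  have fin: "finite (insert i1 I)" using fin_I by simp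
  have count_X0: "count X0 y = (if y \<in> insert i1 I then cnt y else 0)" for y
    unfolding X0_def count_sum using fin by (simp add: count_replicate_mset sum.delta)
  have sum_cnt_I: "(\<Sum>x\<in>I. cnt x) = s"
    unfolding s_def cnt_def using i1_notin by (intro sum.cong) auto
  then have sum_cnt: "(\<Sum>x\<in>insert i1 I. cnt x) = (t - s) + s"
    using fin_I i1_notin by (simp add: cnt_def)
  have unique: "X = X0 \<and> s \<le> t" if "X \<in> R" for X
  proof -
    have forced: "count X i = cnt i" if "i \<in> I" for i
      using representation_forced[OF _ _ assms that] \<open>X \<in> R\<close> i1_notin that
      by (auto simp: R_def cnt_def)
    have sub: "set_mset X \<subseteq> insert i1 I" and "size X = t"
      using \<open>X \<in> R\<close> by (auto simp: R_def multisets_of_size_def)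
    have "(\<Sum>x\<in>I. count X x) = s" using forced sum_cnt_I by simp
    then have "t = count X i1 + s"
      using size_eq_sum_count[OF fin sub] \<open>size X = t\<close> fin_I i1_notin by simp
    then have "count X i1 = cnt i1" "s \<le> t" by (simp_all add: cnt_def)
    then have "count X y = count X0 y" for y
      using forced sub by (cases "y \<in> insert i1 I") (auto simp: count_X0 not_in_iff)
    then show ?thesis using \<open>s \<le> t\<close> by (simp add: multiset_eqI)
  qed
  have exists: "X0 \<in> R" if "s \<le> t"
  proof -
    have "set_mset X0 \<subseteq> insert i1 I" using count_X0 by (metis count_eq_zero_iff subsetI)
    moreover have "size X0 = t" using sum_cnt that by (simp add: X0_def)
    moreover have "B i1 dvd (t - s)" using forced_remainder_dvd that by (simp add: s_def)
    then have "\<forall>x\<in>insert i1 I. B x dvd count X0 x" by (auto simp: count_X0 cnt_def)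
    ultimately show ?thesis by (simp add: R_def multisets_of_size_def)
  qed
  have "R = (if s \<le> t then {X0} else {})" using unique exists by auto
  then show ?thesis unfolding R_def[symmetric] s_def[symmetric] by simp
qed

end

lemma prime_dvd_other_cofactor:
  fixes p :: "'a \<Rightarrow> nat"
  assumes "finite A" "i \<in> A" "j \<in> A" "i \<noteq> j"
  shows "p i dvd (\<Prod>l\<in>A - {j}. p l)"
  by (rule dvd_prodI) (use assms in auto)

lemma prime_not_dvd_own_cofactor:
  fixes p :: "'a \<Rightarrow> nat"
  assumes "finite A" "\<forall>l\<in>A. prime (p l)" "inj_on p A" "i \<in> A"
  shows "\<not> p i dvd (\<Prod>l\<in>A - {i}. p l)"
proof
  assume "p i dvd (\<Prod>l\<in>A - {i}. p l)"
  then obtain j where j: "j \<in> A - {i}" "p i dvd p j"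
    using assms by (auto simp: prime_dvd_prod_iff)
  then have "p i = p j" using assms by (intro primes_dvd_imp_eq) auto
  then show False using inj_onD[OF assms(3)] j assms(4) by blast
qed

lemma cofactor_inverse_exists:
  fixes p :: "'a \<Rightarrow> nat"
  assumes "finite A" "\<forall>l\<in>A. prime (p l)" "inj_on p A" "i \<in> A"
  shows "\<exists>v. [(\<Prod>l\<in>A - {i}. p l) * v = 1] (mod p i)"
proof -
  have "coprime (p i) (\<Prod>l\<in>A - {i}. p l)"
    using assms by (intro prime_imp_coprime prime_not_dvd_own_cofactor) auto
  then show ?thesis by (simp add: cong_solve_coprime_nat coprime_commute)
qed

lemma distinct_primes_prod_dvd:
  fixes p :: "'a \<Rightarrow> nat"
  assumes "\<forall>l\<in>A. prime (p l)" "inj_on p A" "\<And>i. i \<in> A \<Longrightarrow> p i dvd D"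
  shows "(\<Prod>l\<in>A. p l) dvd D"
proof -
  have "[D = 0] (mod (\<Prod>l\<in>A. p l))"
  proof (rule coprime_cong_prod_nat)
    show "coprime (p i) (p j)" if "i \<in> A" "j \<in> A" "i \<noteq> j" for i j
      using assms(1,2) that by (intro primes_coprime) (auto dest: inj_onD)
    show "[D = 0] (mod p i)" if "i \<in> A" for i using assms(3) that by (simp add: cong_0_iff)
  qed
  then show ?thesis by (simp add: cong_0_iff)
qed

text \<open>Residue bookkeeping for the shift \<open>x = e - s\<close>: if \<open>s \<equiv> a (mod m)\<close>, the residue of
  \<open>x v\<close> is that of \<open>(e - a) v\<close>, written \<open>(e + (m - 1) a) v\<close> to stay in \<open>nat\<close>.\<close>

lemma residue_shift:
  fixes x s e a m v :: nat
  assumes "m > 0" "x + s = e" "[s = a] (mod m)"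
  shows "(x * v) mod m = ((e + (m - 1) * a) * v) mod m"
proof -
  have "[x + a = e] (mod m)" using assms(2,3) cong_add[OF cong_refl, of s a m x] by (metis cong_sym)
  also have "[e = e + (m - 1) * a + a] (mod m)"
  proof -
    have "e + (m - 1) * a + a = e + a * m" using assms(1) by (cases m) auto
    then show ?thesis by (simp only: cong_def mod_mult_self1)
  qed
  finally have "[x = e + (m - 1) * a] (mod m)" by (simp add: cong_add_rcancel_nat)
  then have "[x * v = (e + (m - 1) * a) * v] (mod m)" by (rule cong_mult[OF _ cong_refl])
  then show ?thesis by (simp only: cong_def)
qed

text \<open>After subtracting \<open>s = \<Sum>\<^sub>S a\<close> from \<open>e\<close>, every residue either stays the residue of
  \<open>e\<close> (for \<open>i \<notin> S\<close>) or becomes the shifted one (for \<open>i \<in> S\<close>), because \<open>s \<equiv> a\<^sub>i\<close> or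
  \<open>s \<equiv> 0\<close> modulo \<open>p\<^sub>i\<close>.\<close>

lemma shifted_threshold:
  fixes p v B a :: "'a \<Rightarrow> nat" and e :: nat
  assumes fin: "finite I" and S: "S \<subseteq> I" and p_pos: "\<And>i. i \<in> I \<Longrightarrow> p i > 0"
    and p_dvd_a: "\<And>i j. i \<in> I \<Longrightarrow> j \<in> I \<Longrightarrow> j \<noteq> i \<Longrightarrow> p i dvd a j"
  defines "u i \<equiv> (e * v i) mod p i * B i"
    and "w i \<equiv> ((e + (p i - 1) * a i) * v i) mod p i * B i + a i"
  shows "((\<Sum>i\<in>S. a i) \<le> e \<and>
            (\<Sum>i\<in>I. ((e - (\<Sum>i\<in>S. a i)) * v i) mod p i * B i) \<le> e - (\<Sum>i\<in>S. a i))
       \<longleftrightarrow> (\<Sum>i\<in>I-S. u i) + (\<Sum>i\<in>S. w i) \<le> e"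
proof -
  define s where "s = (\<Sum>i\<in>S. a i)"
  define r where "r i = ((e + (p i - 1) * a i) * v i) mod p i * B i" for i
  have fin_S: "finite S" using fin S finite_subset by blast
  have sum_w: "(\<Sum>i\<in>S. w i) = (\<Sum>i\<in>S. r i) + s" by (simp add: w_def r_def s_def sum.distrib)
  have shifted: "(\<Sum>i\<in>I. ((e - s) * v i) mod p i * B i) = (\<Sum>i\<in>I-S. u i) + (\<Sum>i\<in>S. r i)"
    if "s \<le> e"
  proof -
    have residue: "((e - s) * v i) mod p i * B i = (if i \<in> S then r i else u i)" if i: "i \<in> I" for i
    proof -
      have "[s = (if i \<in> S then a i else 0)] (mod p i)"
        unfolding s_def using fin_S S i by (intro sum_cong_single_term p_dvd_a) auto
      from residue_shift[OF p_pos[OF i] _ this, of "e - s"] \<open>s \<le> e\<close>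
      show ?thesis by (simp add: r_def u_def)
    qed
    have "(\<Sum>i\<in>I. ((e - s) * v i) mod p i * B i) = (\<Sum>i\<in>I. if i \<in> S then r i else u i)"
      using residue by (intro sum.cong) auto
    also have "\<dots> = (\<Sum>i\<in>I-S. u i) + (\<Sum>i\<in>S. r i)"
      using fin S by (simp add: sum.If_cases Int_absorb1 Diff_eq)
    finally show ?thesis .
  qed
  have "(s \<le> e \<and> (\<Sum>i\<in>I. ((e - s) * v i) mod p i * B i) \<le> e - s)
      \<longleftrightarrow> (\<Sum>i\<in>I-S. u i) + (\<Sum>i\<in>S. w i) \<le> e"
  proof (cases "s \<le> e")
    case True
    have "(\<Sum>i\<in>I-S. u i) + (\<Sum>i\<in>S. r i) \<le> e - s \<longleftrightarrow> (\<Sum>i\<in>I-S. u i) + (\<Sum>i\<in>S. w i) \<le> e"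
      using sum_w True by linarith
    then show ?thesis using shifted[OF True] True by simp
  next
    case False
    then show ?thesis using sum_w by simp
  qed
  then show ?thesis by (simp only: s_def)
qed

lemma coeff_prod_cofactor_multiples:
  fixes p v :: "nat \<Rightarrow> nat" and k t :: nat
  defines "B i \<equiv> \<Prod>j\<in>{1..k} - {i}. p j"
  assumes "k \<ge> 1" and prime: "\<forall>i\<in>{1..k}. prime (p i)" and inj: "inj_on p {1..k}"
    and inverse: "\<And>i. i \<in> {2..k} \<Longrightarrow> [B i * v i = 1] (mod p i)"
    and "t < (\<Prod>i\<in>{1..k}. p i)"
  shows "(\<Prod>i\<in>{1..k}. fps_multiples (B i) :: 'a::comm_ring_1 fps) $ t
       = (if (\<Sum>i\<in>{2..k}. (t * v i) mod p i * B i) \<le> t then 1 else 0)"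
proof -
  have I': "{1..k} = insert 1 {2..k}" using \<open>k \<ge> 1\<close> by auto
  have card: "card {X \<in> multisets_of_size (insert 1 {2..k}) t. \<forall>x\<in>insert 1 {2..k}. B x dvd count X x}
      = (if (\<Sum>i\<in>{2..k}. (t * v i) mod p i * B i) \<le> t then 1 else 0)"
  proof (rule card_representations)
    show "(\<Prod>i\<in>{1..k}. p i) = p i * B i" if "i \<in> {2..k}" for i
      using that by (simp add: B_def prod.remove)
    show "p i dvd B j" if "i \<in> {2..k}" "j \<in> insert 1 {2..k}" "j \<noteq> i" for i j
      unfolding B_def using that I' by (intro prime_dvd_other_cofactor) auto
    show "p i > 0" if "i \<in> {2..k}" for i using prime that by (simp add: prime_gt_0_nat)
    show "B 1 dvd D" if "\<And>i. i \<in> {2..k} \<Longrightarrow> p i dvd D" for D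
    proof -
      have "B 1 = (\<Prod>i\<in>{2..k}. p i)" unfolding B_def by (intro prod.cong) auto
      then show ?thesis
        using prime inj that by (auto intro!: distinct_primes_prod_dvd intro: inj_on_subset)
    qed
  qed (use inverse \<open>t < _\<close> in auto)
  have "(\<Prod>i\<in>{1..k}. fps_multiples (B i) :: 'a fps) $ t
      = of_nat (card {X \<in> multisets_of_size {1..k} t. \<forall>x\<in>{1..k}. B x dvd count X x})"
    by (rule coeff_prod_fps_multiples) simp
  also have "\<dots> = of_nat (if (\<Sum>i\<in>{2..k}. (t * v i) mod p i * B i) \<le> t then 1 else 0)"
    using card by (simp only: I')
  finally show ?thesis by simp
qed

lemma coeff_as_alternating_threshold_sum:
  fixes p :: "nat \<Rightarrow> nat" and k n e :: nat and f :: "'a::field fps"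
  assumes "k \<ge> 2" and prime: "\<forall>i\<in>{1..k}. prime (p i)" and inj: "inj_on p {1..k}"
    and n: "n = (\<Prod>i\<in>{1..k}. p i)"
    and f: "f = (1 - fps_X ^ n) * (\<Prod>i\<in>{2..k}. 1 - fps_X ^ (\<Prod>j\<in>{2..k} - {i}. p j))
               / (\<Prod>i\<in>{1..k}. 1 - fps_X ^ (\<Prod>j\<in>{1..k} - {i}. p j))"
    and "e < n"
  shows "\<exists>u w :: nat \<Rightarrow> int. f $ e = of_int (\<Sum>S\<in>Pow {2..k}. (-1)^card S *
           (if (\<Sum>i\<in>{2..k}-S. u i) + (\<Sum>i\<in>S. w i) \<le> int e then 1 else 0))"
proof -
  define a where "a i = (\<Prod>j\<in>{2..k} - {i}. p j)" for i
  define B where "B i = (\<Prod>j\<in>{1..k} - {i}. p j)" for i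
  have p_pos: "p i > 0" if "i \<in> {1..k}" for i using prime that by (simp add: prime_gt_0_nat)
  have "\<exists>v. [B i * v = 1] (mod p i)" if "i \<in> {2..k}" for i
    unfolding B_def using prime inj that by (intro cofactor_inverse_exists) auto
  then obtain v where v: "\<And>i. i \<in> {2..k} \<Longrightarrow> [B i * v i = 1] (mod p i)" by metis
  define u where "u i = (e * v i) mod p i * B i" for i
  define w where "w i = ((e + (p i - 1) * a i) * v i) mod p i * B i + a i" for i
  have "f $ e = (\<Sum>S\<in>Pow {2..k}. (-1)^card S * (if (\<Sum>i\<in>S. a i) \<le> e
               then (\<Prod>i\<in>{1..k}. fps_multiples (B i)) $ (e - (\<Sum>i\<in>S. a i)) else 0))"
    using p_pos \<open>e < n\<close> f unfolding n a_def B_def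
    by (intro coeff_quotient_below) (auto intro!: prod_pos)
  also have "\<dots> = (\<Sum>S\<in>Pow {2..k}. (-1)^card S *
                   (if (\<Sum>i\<in>{2..k}-S. u i) + (\<Sum>i\<in>S. w i) \<le> e then 1 else 0))"
  proof (intro sum.cong refl arg_cong2[where f = "(*)"])
    fix S assume S: "S \<in> Pow {2..k}"
    have shift: "((\<Sum>i\<in>S. a i) \<le> e \<and>
            (\<Sum>i\<in>{2..k}. ((e - (\<Sum>i\<in>S. a i)) * v i) mod p i * B i) \<le> e - (\<Sum>i\<in>S. a i))
       \<longleftrightarrow> (\<Sum>i\<in>{2..k}-S. u i) + (\<Sum>i\<in>S. w i) \<le> e"
      unfolding u_def w_def a_def using S p_pos
      by (intro shifted_threshold prime_dvd_other_cofactor) auto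
    show "(if (\<Sum>i\<in>S. a i) \<le> e then (\<Prod>i\<in>{1..k}. fps_multiples (B i)) $ (e - (\<Sum>i\<in>S. a i))
           else 0) = (if (\<Sum>i\<in>{2..k}-S. u i) + (\<Sum>i\<in>S. w i) \<le> e then 1 else 0)"
    proof -
      have "e - (\<Sum>i\<in>S. a i) < n" using \<open>e < n\<close> by linarith
      then show ?thesis
        using coeff_prod_cofactor_multiples[OF _ prime inj v[unfolded B_def], of "e - (\<Sum>i\<in>S. a i)"]
          \<open>k \<ge> 2\<close> shift unfolding B_def n by auto
    qed
  qed
  also have "\<dots> = of_int (\<Sum>S\<in>Pow {2..k}. (-1)^card S *
           (if (\<Sum>i\<in>{2..k}-S. int (u i)) + (\<Sum>i\<in>S. int (w i)) \<le> int e then 1 else 0))"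
    by (simp add: of_int_sum if_distrib[of of_int] flip: of_nat_sum of_nat_add cong: if_cong)
  finally show ?thesis by blast
qed

theorem lemma2:
  fixes p :: "nat \<Rightarrow> nat" and k n :: nat and f :: "rat fps"
  assumes "k \<ge> 2"
    and "\<forall>i\<in>{1..k}. prime (p i)"
    and "inj_on p {1..k}"
    and "n = (\<Prod>i\<in>{1..k}. p i)"
    and "f = (1 - fps_X ^ n) * (\<Prod>i\<in>{2..k}. 1 - fps_X ^ (\<Prod>j\<in>{2..k} - {i}. p j))
               / (\<Prod>i\<in>{1..k}. 1 - fps_X ^ (\<Prod>j\<in>{1..k} - {i}. p j))"
  shows "\<forall>m. \<bar>coeff (truncate_fps n f) m\<bar> \<le> of_nat ((k - 2) choose ((k - 2) div 2))"
proof
  fix m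
  show "\<bar>coeff (truncate_fps n f) m\<bar> \<le> of_nat ((k - 2) choose ((k - 2) div 2))"
  proof (cases "m < n")
    case False
    then show ?thesis by (simp add: coeff_truncate_fps)
  next
    case True
    then obtain u w :: "nat \<Rightarrow> int" where coeff: "f $ m = of_int (\<Sum>S\<in>Pow {2..k}. (-1)^card S *
        (if (\<Sum>i\<in>{2..k}-S. u i) + (\<Sum>i\<in>S. w i) \<le> int m then 1 else 0))" (is "_ = of_int ?z")
      using coeff_as_alternating_threshold_sum[OF assms] by blast
    have card: "card {2..k} - 1 = k - 2" by simp
    have "\<bar>?z\<bar> \<le> int ((k - 2) choose ((k - 2) div 2))"
      using alternating_threshold_sum_bound[of "{2..k}" u w "int m"] assms(1) unfolding card by simp
    then have "(of_int \<bar>?z\<bar> :: rat) \<le> of_int (int ((k - 2) choose ((k - 2) div 2)))"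
      by (simp only: of_int_le_iff)
    then have "\<bar>f $ m\<bar> \<le> of_nat ((k - 2) choose ((k - 2) div 2))"
      unfolding coeff by (simp only: of_int_abs of_int_of_nat_eq)
    then show ?thesis using True by (simp add: coeff_truncate_fps)
  qed
qed

end
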